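(* Let $\mathcal{O}$ be the fixed one-counter net described in the context and let the formulas $\varphi_i$ ($i\ge1$) be as defined there. Then for all $n\ge0$ and $i\ge1$: (1) $(t,n)\models\varphi_i$ if and only if $2^i$ divides $n$; (2) $(\bar t,n)\models\varphi_i$ if and only if $2^i$ does not divide $n$.
   Context: A one-counter net is a tuple $(Q,\{Q_p\},\delta_0,\delta_{>0})$ with $\delta_0\subseteq Q\times\{0,1\}\times Q$, $\delta_{>0}\subseteq Q\times\{-1,0,1\}\times Q$ and $\delta_0\subseteq\delta_{>0}$; its transition system has states $Q\times\mathbb{N}$, $(q,n)$ satisfies $p$ iff $q\in Q_p$, and $(q,n)\to(q',n+k)$ iff either $n=0$ and $(q,k,q')\in\delta_0$, or $n>0$ and $(q,k,q')\in\delta_{>0}$. The fixed net $\mathcal{O}$ has control locations $t,\bar t,q_0,q_1,q_2,q_3,f,g,p_0,p_1$; the atomic propositions are the control locations, each holding exactly at itself. $\delta_{>0}$ consists of $(q_0,-1,q_1)$, $(q_1,-1,q_2)$, $(q_2,-1,q_3)$, $(q_3,-1,q_0)$, $(q_1,-1,q_1)$, $(q_3,-1,q_3)$, $(q_0,0,t)$, $(t,0,q_0)$, $(q_2,0,t)$, $(q_1,0,\bar t)$, $(\bar t,0,q_1)$, $(\bar t,0,q_2)$, $(q_3,0,\bar t)$, $(\bar t,0,q_3)$, $(t,0,f)$, $(\bar t,-1,f)$, $(f,-1,g)$, $(g,-1,f)$, $(\bar t,1,p_1)$, $(p_1,1,p_1)$, $(p_1,0,\bar t)$, $(p_0,0,\bar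 t)$, $(\bar t,0,p_0)$; and $\delta_0=\{(\bar t,1,p_1),(p_0,0,\bar t),(\bar t,0,p_0),(t,0,q_0),(t,0,f)\}$. $\mathsf{CTL}$ is interpreted with the standard semantics; $\exists\mathsf{F}\psi$ (written $\mathsf{EF}\psi$) abbreviates $\exists\,\mathtt{true}\,\mathsf{U}\,\psi$, and $\vee$ is defined as usual. Let $\mathrm{test}=t\vee\bar t$, $\varphi_\diamond=q_0\vee q_1\vee q_2\vee q_3$, $\varphi_1=\mathrm{test}\wedge\exists\mathsf{X}\big(f\wedge\mathsf{EF}(f\wedge\neg\exists\mathsf{X}g)\big)$, and for $i>1$: $\mu_i=\exists(\varphi_\diamond\wedge\exists\mathsf{X}\varphi_{i-1})\,\mathsf{U}\,(q_0\wedge\neg\exists\mathsf{X}q_1)$ and $\varphi_i=\mathrm{test}\wedge\exists\mathsf{X}\mu_i$. *)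

theory Defs
  imports Main
begin

text \<open>A one-counter net with control locations of type 'q and atomic propositions 'p.
  delta0 are transitions enabled at counter value 0, deltapos those enabled at positive values.\<close>
record ('q, 'p) ocn =
  props  :: "'p \<Rightarrow> 'q set"
  delta0 :: "('q \<times> int \<times> 'q) set"
  deltapos :: "('q \<times> int \<times> 'q) set"

definition ocn_wf :: "('q, 'p) ocn \<Rightarrow> bool" where
  "ocn_wf N \<longleftrightarrow> (\<forall>(q,k,q')\<in>delta0 N. k \<in> {0,1}) \<and>
                 (\<forall>(q,k,q')\<in>deltapos N. k \<in> {-1,0,1}) \<and> delta0 N \<subseteq> deltapos N"

definition ocn_step :: "('q, 'p) ocn \<Rightarrow> ('q \<times> nat) \<Rightarrow> ('q \<times> nat) \<Rightarrow> bool" where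
  "ocn_step N c c' \<longleftrightarrow>
     (\<exists>k. int (snd c') = int (snd c) + k \<and>
          ((snd c = 0 \<and> (fst c, k, fst c') \<in> delta0 N) \<or>
           (snd c > 0 \<and> (fst c, k, fst c') \<in> deltapos N)))"

datatype 'p ctl =
    TT
  | Prop 'p
  | Neg "'p ctl"
  | Conj "'p ctl" "'p ctl"
  | EXn "'p ctl"
  | EUn "'p ctl" "'p ctl"

definition Disj :: "'p ctl \<Rightarrow> 'p ctl \<Rightarrow> 'p ctl" where
  "Disj a b = Neg (Conj (Neg a) (Neg b))"

definition EF :: "'p ctl \<Rightarrow> 'p ctl" where
  "EF a = EUn TT a"

fun sat :: "('s \<Rightarrow> 's \<Rightarrow> bool) \<Rightarrow> ('p \<Rightarrow> 's set) \<Rightarrow> 's \<Rightarrow> 'p ctl \<Rightarrow> bool" where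
  "sat R L s TT = True"
| "sat R L s (Prop p) = (s \<in> L p)"
| "sat R L s (Neg a) = (\<not> sat R L s a)"
| "sat R L s (Conj a b) = (sat R L s a \<and> sat R L s b)"
| "sat R L s (EXn a) = (\<exists>s'. R s s' \<and> sat R L s' a)"
| "sat R L s (EUn a b) = (\<exists>(\<pi>::nat \<Rightarrow> 's) k. \<pi> 0 = s \<and> (\<forall>j<k. R (\<pi> j) (\<pi> (Suc j))) \<and>
                           sat R L (\<pi> k) b \<and> (\<forall>j<k. sat R L (\<pi> j) a))"

definition ocn_sat :: "('q, 'p) ocn \<Rightarrow> ('q \<times> nat) \<Rightarrow> 'p ctl \<Rightarrow> bool" where
  "ocn_sat N c a = sat (ocn_step N) (\<lambda>p. {c. fst c \<in> props N p}) c a"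

datatype loc = t | tbar | q0 | q1 | q2 | q3 | f | g | p0 | p1

definition O_pos :: "(loc \<times> int \<times> loc) set" where
  "O_pos = {(q0,-1,q1), (q1,-1,q2), (q2,-1,q3), (q3,-1,q0), (q1,-1,q1), (q3,-1,q3),
            (q0,0,t), (t,0,q0), (q2,0,t), (q1,0,tbar), (tbar,0,q1), (tbar,0,q2),
            (q3,0,tbar), (tbar,0,q3), (t,0,f), (tbar,-1,f), (f,-1,g), (g,-1,f),
            (tbar,1,p1), (p1,1,p1), (p1,0,tbar), (p0,0,tbar), (tbar,0,p0)}"

definition O_zero :: "(loc \<times> int \<times> loc) set" where
  "O_zero = {(tbar,1,p1), (p0,0,tbar), (tbar,0,p0), (t,0,q0), (t,0,f)}"

definition netO :: "(loc, loc) ocn" where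
  "netO = \<lparr> props = (\<lambda>p. {p}), delta0 = O_zero, deltapos = O_pos \<rparr>"

definition test :: "loc ctl" where
  "test = Disj (Prop t) (Prop tbar)"

definition phi_diamond :: "loc ctl" where
  "phi_diamond = Disj (Prop q0) (Disj (Prop q1) (Disj (Prop q2) (Prop q3)))"

text \<open>phi i for i >= 1 is the formula phi_i of the paper; phi 0 is an unused dummy.\<close>
fun phi :: "nat \<Rightarrow> loc ctl" where
  "phi 0 = Neg TT"
| "phi (Suc 0) = Conj test (EXn (Conj (Prop f) (EF (Conj (Prop f) (Neg (EXn (Prop g)))))))"
| "phi (Suc (Suc k)) = Conj test (EXn
      (EUn (Conj phi_diamond (EXn (phi (Suc k)))) (Conj (Prop q0) (Neg (EXn (Prop q1))))))"

end

theory Submission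
  imports Defs
begin

(* The f-g loop only decrements and f is stuck exactly at counter 0, so f \<and> EF(f \<and> \<not>EX g)
   holds at (f, m) iff m is even; t moves to f keeping the counter, tbar decrementing it.
   For i \<ge> 1 put d = 2^i. The q-cycle only decrements, and by induction the guard EX \<phi>_i
   holds at (q, m) iff m > 0 and d divides m exactly for q \<in> {q0, q2}. Hence a run witnessing
   \<mu>_i, which must descend to (q0, 0), is unique: at counter m it sits at a location determined
   by m mod 2d, namely q0 iff 2d divides m. *)

lemma sat_EUn_target: "sat R L s b \<Longrightarrow> sat R L s (EUn a b)"
  by (simp only: sat.simps) (intro exI[of _ "\<lambda>_. s"] exI[of _ "0::nat"]; simp)

lemma sat_EUn_step:
  assumes "sat R L s a" and "R s s'" and "sat R L s' (EUn a b)"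
  shows "sat R L s (EUn a b)"
proof -
  from assms(3) obtain \<pi> k where "\<pi> 0 = s'" "\<forall>j<k. R (\<pi> j) (\<pi> (Suc j))"
    "sat R L (\<pi> k) b" "\<forall>j<k. sat R L (\<pi> j) a"
    by auto
  with assms(1,2) show ?thesis
    by (simp only: sat.simps, intro exI[of _ "case_nat s \<pi>"] exI[of _ "Suc k"])
      (auto simp: less_Suc_eq_0_disj)
qed

lemma sat_EUn_induct [consumes 1, case_names target step]:
  assumes "sat R L s (EUn a b)"
    and target: "\<And>s. sat R L s b \<Longrightarrow> P s"
    and step: "\<And>s s'. sat R L s a \<Longrightarrow> R s s' \<Longrightarrow> P s' \<Longrightarrow> P s"
  shows "P s"
proof -
  from assms(1) obtain \<pi> k where start: "\<pi> 0 = s" and path: "\<forall>j<k. R (\<pi> j) (\<pi> (Suc j))"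
    and last: "sat R L (\<pi> k) b" and before: "\<forall>j<k. sat R L (\<pi> j) a"
    by auto
  have "P (\<pi> j)" if "j \<le> k" for j
    using that
  proof (induction rule: inc_induct)
    case base
    show ?case using last by (rule target)
  next
    case (step j)
    then show ?case using path before by (auto intro: assms(3))
  qed
  then show ?thesis using start by auto
qed

abbreviation satO :: "loc \<times> nat \<Rightarrow> loc ctl \<Rightarrow> bool" where
  "satO \<equiv> sat (ocn_step netO) (\<lambda>p. {c. fst c = p})"

lemma ocn_sat_netO: "ocn_sat netO = satO"
  by (simp add: fun_eq_iff ocn_sat_def netO_def)

lemma ocn_step_netO:
  "ocn_step netO (x, m) (y, m') \<longleftrightarrow>
     (\<exists>k. int m' = int m + k \<and> (m = 0 \<and> (x, k, y) \<in> O_zero \<or> 0 < m \<and> (x, k, y) \<in> O_pos))"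
  by (simp add: ocn_step_def netO_def)

lemma step_t_iff: "ocn_step netO (t, m) (y, m') \<longleftrightarrow> (y = q0 \<or> y = f) \<and> m' = m"
  by (simp add: ocn_step_netO O_pos_def O_zero_def conj_disj_distribL ex_disj_distrib) arith

lemma step_tbar_iff:
  "ocn_step netO (tbar, m) (y, m') \<longleftrightarrow>
     (y = p1 \<and> m' = m + 1 \<or> y = p0 \<and> m' = m) \<or>
     0 < m \<and> ((y = q1 \<or> y = q2 \<or> y = q3) \<and> m' = m \<or> y = f \<and> m' = m - 1)"
  by (simp add: ocn_step_netO O_pos_def O_zero_def conj_disj_distribL ex_disj_distrib)
    (rule iffI; elim disjE conjE; auto)

lemma step_q0_iff: "ocn_step netO (q0, m) (y, m') \<longleftrightarrow> 0 < m \<and> (y = q1 \<and> m' = m - 1 \<or> y = t \<and> m' = m)"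
  by (simp add: ocn_step_netO O_pos_def O_zero_def conj_disj_distribL ex_disj_distrib) arith

lemma step_q1_iff:
  "ocn_step netO (q1, m) (y, m') \<longleftrightarrow> 0 < m \<and> ((y = q1 \<or> y = q2) \<and> m' = m - 1 \<or> y = tbar \<and> m' = m)"
  by (simp add: ocn_step_netO O_pos_def O_zero_def conj_disj_distribL ex_disj_distrib) arith

lemma step_q2_iff: "ocn_step netO (q2, m) (y, m') \<longleftrightarrow> 0 < m \<and> (y = q3 \<and> m' = m - 1 \<or> y = t \<and> m' = m)"
  by (simp add: ocn_step_netO O_pos_def O_zero_def conj_disj_distribL ex_disj_distrib) arith

lemma step_q3_iff:
  "ocn_step netO (q3, m) (y, m') \<longleftrightarrow> 0 < m \<and> ((y = q3 \<or> y = q0) \<and> m' = m - 1 \<or> y = tbar \<and> m' = m)"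
  by (simp add: ocn_step_netO O_pos_def O_zero_def conj_disj_distribL ex_disj_distrib) arith

lemma step_f_iff: "ocn_step netO (f, m) (y, m') \<longleftrightarrow> 0 < m \<and> y = g \<and> m' = m - 1"
  by (simp add: ocn_step_netO O_pos_def O_zero_def conj_disj_distribL ex_disj_distrib) arith

lemma step_g_iff: "ocn_step netO (g, m) (y, m') \<longleftrightarrow> 0 < m \<and> y = f \<and> m' = m - 1"
  by (simp add: ocn_step_netO O_pos_def O_zero_def conj_disj_distribL ex_disj_distrib) arith

lemmas step_iffs = step_t_iff step_tbar_iff step_q0_iff step_q1_iff step_q2_iff step_q3_iff
  step_f_iff step_g_iff

lemma step_within_cycle_iff:
  assumes "x \<in> {q0, q1, q2, q3}" and "y \<in> {q0, q1, q2, q3}"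
  shows "ocn_step netO (x, m) (y, m') \<longleftrightarrow> 0 < m \<and> m' = m - 1 \<and> (x, -1, y) \<in> O_pos"
  using assms by (cases x; cases y) (simp_all add: step_iffs O_pos_def)

lemma sat_test_iff: "satO (x, m) test \<longleftrightarrow> x \<in> {t, tbar}"
  by (auto simp: test_def Disj_def)

lemma sat_phi_diamond_iff: "satO (x, m) phi_diamond \<longleftrightarrow> x \<in> {q0, q1, q2, q3}"
  by (auto simp: phi_diamond_def Disj_def)

lemma sat_phi_imp_test: "1 \<le> i \<Longrightarrow> satO (x, m) (phi i) \<Longrightarrow> x \<in> {t, tbar}"
  by (cases i rule: phi.cases) (auto simp: sat_test_iff simp del: sat.simps(6))

definition tests_dvd :: "nat \<Rightarrow> loc ctl \<Rightarrow> bool" where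
  "tests_dvd d a \<longleftrightarrow> (\<forall>n. (satO (t, n) a \<longleftrightarrow> d dvd n) \<and> (satO (tbar, n) a \<longleftrightarrow> \<not> d dvd n))"

lemma sat_f_stuck_iff: "satO c (Conj (Prop f) (Neg (EXn (Prop g)))) \<longleftrightarrow> c = (f, 0)"
  by (cases c) (auto simp: step_f_iff)

lemma sat_EF_f_stuck_iff: "satO (f, m) (EF (Conj (Prop f) (Neg (EXn (Prop g))))) \<longleftrightarrow> even m"
proof
  have "(fst c = f \<longrightarrow> even (snd c)) \<and> (fst c = g \<longrightarrow> odd (snd c))"
    if "satO c (EF (Conj (Prop f) (Neg (EXn (Prop g)))))" for c
    using that unfolding EF_def
  proof (induction rule: sat_EUn_induct)
    case (target c)
    then have "c = (f, 0)" using sat_f_stuck_iff by blast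
    then show ?case by simp
  next
    case (step c c')
    then show ?case by (cases c; cases c') (auto simp: step_iffs)
  qed
  then show "satO (f, m) (EF (Conj (Prop f) (Neg (EXn (Prop g))))) \<Longrightarrow> even m"
    by fastforce
next
  have "satO (f, 2 * k) (EF (Conj (Prop f) (Neg (EXn (Prop g)))))" for k
    unfolding EF_def
  proof (induction k)
    case 0
    show ?case by (rule sat_EUn_target) (auto simp: step_f_iff)
  next
    case (Suc k)
    have "satO (g, Suc (2 * k)) (EUn TT (Conj (Prop f) (Neg (EXn (Prop g)))))"
      by (rule sat_EUn_step[OF _ _ Suc]) (auto simp: step_g_iff)
    then show ?case by (rule sat_EUn_step[rotated 2]) (auto simp: step_f_iff)
  qed
  then show "even m \<Longrightarrow> satO (f, m) (EF (Conj (Prop f) (Neg (EXn (Prop g)))))"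
    by (auto elim: evenE)
qed

lemma tests_dvd_phi_1: "tests_dvd 2 (phi 1)"
  by (auto simp: tests_dvd_def sat_test_iff step_iffs sat_EF_f_stuck_iff odd_pos
      simp del: sat.simps(6))

(* The location at counter m of the unique guarded descent along the q-cycle to (q0, 0). *)
definition phase :: "nat \<Rightarrow> nat \<Rightarrow> loc" where
  "phase d m = (let r = m mod (2 * d) in
     if r = 0 then q0 else if r < d then q3 else if r = d then q2 else q1)"

lemma dvd_iff_mod_double:
  fixes d m :: nat
  assumes "0 < d"
  shows "d dvd m \<longleftrightarrow> m mod (2 * d) = 0 \<or> m mod (2 * d) = d"
proof -
  have "m mod (2 * d) < 2 * d" using assms by simp
  moreover have "d dvd m \<longleftrightarrow> d dvd m mod (2 * d)"
    by (simp add: dvd_mod_iff)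
  ultimately show ?thesis
    by (auto elim!: dvdE simp: mult_less_cancel1)
qed

lemma phase_in_cycle: "phase d m \<in> {q0, q1, q2, q3}"
  by (simp add: phase_def Let_def)

lemma phase_eq_q0_iff: "phase d m = q0 \<longleftrightarrow> 2 * d dvd m"
  by (simp add: phase_def Let_def dvd_eq_mod_eq_0)

lemma phase_guard: "0 < d \<Longrightarrow> phase d m \<in> {q0, q2} \<longleftrightarrow> d dvd m"
  using dvd_iff_mod_double[of d m] by (auto simp: phase_def Let_def)

lemma phase_edge: "2 \<le> d \<Longrightarrow> (phase d (Suc m), -1, phase d m) \<in> O_pos"
  using mod_less_divisor[of "2 * d" m] by (auto simp: phase_def Let_def mod_Suc O_pos_def)

lemma phase_unique:
  assumes "2 \<le> d" and "x \<in> {q0, q1, q2, q3}" and "(x, -1, phase d m) \<in> O_pos"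
    and "x \<in> {q0, q2} \<longleftrightarrow> d dvd Suc m"
  shows "x = phase d (Suc m)"
  using assms mod_less_divisor[of "2 * d" m] dvd_iff_mod_double[of d "Suc m"]
  by (auto simp: phase_def Let_def mod_Suc O_pos_def split: if_splits)

definition mu :: "nat \<Rightarrow> loc ctl" where
  "mu i = EUn (Conj phi_diamond (EXn (phi i))) (Conj (Prop q0) (Neg (EXn (Prop q1))))"

lemma phi_Suc: "1 \<le> i \<Longrightarrow> phi (Suc i) = Conj test (EXn (mu i))"
  by (cases i) (simp_all add: mu_def)

lemma sat_EX_phi_on_cycle:
  assumes "1 \<le> i" and "tests_dvd (2 ^ i) (phi i)" and "x \<in> {q0, q1, q2, q3}"
  shows "satO (x, m) (EXn (phi i)) \<longleftrightarrow> 0 < m \<and> (x \<in> {q0, q2} \<longleftrightarrow> 2 ^ i dvd m)"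
proof -
  have at_tests: "satO (t, n) (phi i) \<longleftrightarrow> 2 ^ i dvd n" "satO (tbar, n) (phi i) \<longleftrightarrow> \<not> 2 ^ i dvd n" for n
    using assms(2) by (simp_all add: tests_dvd_def)
  have elsewhere: "\<not> satO (y, n) (phi i)" if "y \<notin> {t, tbar}" for y n
    using that sat_phi_imp_test[OF assms(1)] by blast
  from assms(3) show ?thesis
    by (auto simp: step_iffs split_paired_Ex conj_disj_distribR ex_disj_distrib at_tests elsewhere)
qed

lemma sat_mu_iff:
  assumes "1 \<le> i" and "tests_dvd (2 ^ i) (phi i)"
  shows "satO (x, m) (mu i) \<longleftrightarrow> x = phase (2 ^ i) m"
proof
  define d :: nat where "d = 2 ^ i"
  have "2 \<le> d" using \<open>1 \<le> i\<close> by (simp add: d_def self_le_power)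
  have "fst c = phase d (snd c)" if "satO c (mu i)" for c
    using that unfolding mu_def
  proof (induction rule: sat_EUn_induct)
    case (target c)
    then show ?case by (cases c) (auto simp: step_q0_iff phase_def)
  next
    case (step c c')
    obtain x m y m' where c: "c = (x, m)" and c': "c' = (y, m')" by fastforce
    have x: "x \<in> {q0, q1, q2, q3}" and guard: "0 < m" "x \<in> {q0, q2} \<longleftrightarrow> d dvd m"
      using step.hyps(1) sat_EX_phi_on_cycle[OF assms]
      by (auto simp: c d_def sat_phi_diamond_iff simp del: sat.simps(5))
    have "y = phase d m'" using step.IH c' by simp
    then have "m' = m - 1" "(x, -1, phase d (m - 1)) \<in> O_pos"
      using step.hyps(2) step_within_cycle_iff[OF x phase_in_cycle] c c' by auto
    then have "x = phase d (Suc (m - 1))"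
      using phase_unique[OF \<open>2 \<le> d\<close> x, of "m - 1"] guard by simp
    then show ?case using c \<open>0 < m\<close> by simp
  qed
  then show "satO (x, m) (mu i) \<Longrightarrow> x = phase (2 ^ i) m"
    by (fastforce simp: d_def)
  have "satO (phase d m, m) (mu i)" for m
  proof (induction m)
    case 0
    show ?case unfolding mu_def
      by (rule sat_EUn_target) (auto simp: phase_def step_q0_iff)
  next
    case (Suc m)
    have "satO (phase d (Suc m), Suc m) (Conj phi_diamond (EXn (phi i)))"
      using sat_EX_phi_on_cycle[OF assms phase_in_cycle] phase_guard[of d] \<open>2 \<le> d\<close> phase_in_cycle
      by (simp add: d_def sat_phi_diamond_iff del: sat.simps(5))
    moreover have "ocn_step netO (phase d (Suc m), Suc m) (phase d m, m)"
      using step_within_cycle_iff[OF phase_in_cycle phase_in_cycle] phase_edge[OF \<open>2 \<le> d\<close>]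
      by simp
    ultimately show ?case
      using Suc unfolding mu_def by (rule sat_EUn_step)
  qed
  then show "x = phase (2 ^ i) m \<Longrightarrow> satO (x, m) (mu i)"
    by (simp add: d_def)
qed

lemma tests_dvd_phi_Suc:
  assumes "1 \<le> i" and "tests_dvd (2 ^ i) (phi i)"
  shows "tests_dvd (2 ^ Suc i) (phi (Suc i))"
proof -
  let ?d = "2 ^ i :: nat"
  have t: "satO (t, n) (EXn (mu i)) \<longleftrightarrow> 2 * ?d dvd n" for n
    using phase_in_cycle[of ?d n]
    by (auto simp: split_paired_Ex step_t_iff sat_mu_iff[OF assms] phase_eq_q0_iff[symmetric])
  have tbar: "satO (tbar, n) (EXn (mu i)) \<longleftrightarrow> \<not> 2 * ?d dvd n" for n
    using phase_in_cycle[of ?d n] phase_in_cycle[of ?d "n - 1"] phase_in_cycle[of ?d "Suc n"]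
      phase_eq_q0_iff[of ?d 0]
    by (auto simp: split_paired_Ex step_tbar_iff sat_mu_iff[OF assms] phase_eq_q0_iff[symmetric])
  show ?thesis
    by (simp add: tests_dvd_def phi_Suc[OF assms(1)] sat_test_iff t tbar del: sat.simps(5))
qed

lemma tests_dvd_phi: "1 \<le> i \<Longrightarrow> tests_dvd (2 ^ i) (phi i)"
proof (induction i rule: nat_induct_at_least)
  case base
  show ?case using tests_dvd_phi_1 by simp
next
  case (Suc i)
  then show ?case by (rule tests_dvd_phi_Suc)
qed

theorem lemma1:
  fixes n i :: nat
  assumes "i \<ge> 1"
  shows "(ocn_sat netO (t, n) (phi i) \<longleftrightarrow> 2 ^ i dvd n) \<and>
         (ocn_sat netO (tbar, n) (phi i) \<longleftrightarrow> \<not> 2 ^ i dvd n)"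
  using tests_dvd_phi[OF assms] by (simp add: tests_dvd_def ocn_sat_netO)

end
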